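(* For every ordered field $C$, the theory $T_{\mathrm{Ham}}$ of independent dense Hamel spaces over $C$ is consistent, i.e., there exists an independent dense Hamel space over $C$.
   Context: Let $C$ be an ordered field. A $2$-ordered $C$-vector space is a $C$-vector space $G$ with two total orderings $<_0,<_1$ such that $G$ is an ordered $C$-vector space with respect to each. Put $G_\infty=G\cup\{\infty\}$, with $G<_0\infty$, $G<_1\infty$. A Hamel valuation on $G$ is a map $v:G\to G_\infty$ such that for all $x,y\in G$ and $\lambda\in C^{\times}$: $v(x)=\infty$ iff $x=0$; $v(x+y)\ge_0\min_0(v(x),v(y))$; $v(\lambda x)=v(x)$; if $0<_1x<_1y$ then $v(x)\ge_0v(y)$; $v(v(x))=v(x)$ (with $v(\infty)=\infty$); and $v(x)>_10$. A Hamel space is such a pair $(G,v)$. It is independent if for all $a_0,b_0,a_1,b_1\in G\cup\{\pm\infty\}$ with $a_0<_0b_0$ and $a_1<_1b_1$ there is $z\in G$ with $a_0<_0z<_0b_0$ and $a_1<_1z<_1b_1$; it is dense if for all $a<_0b$ in $G$ there is $c\in G$ with $a<_0v(c)<_0b$. *)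

theory Defs
  imports Main
begin

definition vector_space_on ::
  "'g set \<Rightarrow> ('g \<Rightarrow> 'g \<Rightarrow> 'g) \<Rightarrow> 'g \<Rightarrow> ('c::field \<Rightarrow> 'g \<Rightarrow> 'g) \<Rightarrow> bool" where
  "vector_space_on G add zero scal \<longleftrightarrow>
     zero \<in> G \<and>
     (\<forall>x\<in>G. \<forall>y\<in>G. add x y \<in> G) \<and>
     (\<forall>a. \<forall>x\<in>G. scal a x \<in> G) \<and>
     (\<forall>x\<in>G. \<forall>y\<in>G. \<forall>z\<in>G. add (add x y) z = add x (add y z)) \<and>
     (\<forall>x\<in>G. \<forall>y\<in>G. add x y = add y x) \<and>
     (\<forall>x\<in>G. add x zero = x) \<and>
     (\<forall>x\<in>G. \<exists>y\<in>G. add x y = zero) \<and>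
     (\<forall>a b. \<forall>x\<in>G. scal (a + b) x = add (scal a x) (scal b x)) \<and>
     (\<forall>a. \<forall>x\<in>G. \<forall>y\<in>G. scal a (add x y) = add (scal a x) (scal a y)) \<and>
     (\<forall>a b. \<forall>x\<in>G. scal (a * b) x = scal a (scal b x)) \<and>
     (\<forall>x\<in>G. scal 1 x = x)"

definition strict_total_order_on :: "'g set \<Rightarrow> ('g \<Rightarrow> 'g \<Rightarrow> bool) \<Rightarrow> bool" where
  "strict_total_order_on G lt \<longleftrightarrow>
     (\<forall>x\<in>G. \<not> lt x x) \<and>
     (\<forall>x\<in>G. \<forall>y\<in>G. \<forall>z\<in>G. lt x y \<longrightarrow> lt y z \<longrightarrow> lt x z) \<and>
     (\<forall>x\<in>G. \<forall>y\<in>G. x \<noteq> y \<longrightarrow> lt x y \<or> lt y x)"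

definition ordered_vector_space_on ::
  "'g set \<Rightarrow> ('g \<Rightarrow> 'g \<Rightarrow> 'g) \<Rightarrow> 'g \<Rightarrow> ('c::linordered_field \<Rightarrow> 'g \<Rightarrow> 'g)
    \<Rightarrow> ('g \<Rightarrow> 'g \<Rightarrow> bool) \<Rightarrow> bool" where
  "ordered_vector_space_on G add zero scal lt \<longleftrightarrow>
     vector_space_on G add zero scal \<and>
     strict_total_order_on G lt \<and>
     (\<forall>x\<in>G. \<forall>y\<in>G. \<forall>z\<in>G. lt x y \<longrightarrow> lt (add x z) (add y z)) \<and>
     (\<forall>a::'c. \<forall>x\<in>G. \<forall>y\<in>G. 0 < a \<longrightarrow> lt x y \<longrightarrow> lt (scal a x) (scal a y))"

text \<open>Orderings on G_\<infinity> = G \<union> {\<infinity>}, represented as option with None = \<infinity> on top.\<close>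
fun inf_less :: "('g \<Rightarrow> 'g \<Rightarrow> bool) \<Rightarrow> 'g option \<Rightarrow> 'g option \<Rightarrow> bool" where
  "inf_less lt (Some a) (Some b) = lt a b"
| "inf_less lt (Some a) None = True"
| "inf_less lt None _ = False"

definition inf_le :: "('g \<Rightarrow> 'g \<Rightarrow> bool) \<Rightarrow> 'g option \<Rightarrow> 'g option \<Rightarrow> bool" where
  "inf_le lt a b \<longleftrightarrow> inf_less lt a b \<or> a = b"

fun v_ext :: "('g \<Rightarrow> 'g option) \<Rightarrow> 'g option \<Rightarrow> 'g option" where
  "v_ext v None = None"
| "v_ext v (Some g) = v g"

definition hamel_valuation ::
  "'g set \<Rightarrow> ('g \<Rightarrow> 'g \<Rightarrow> 'g) \<Rightarrow> 'g \<Rightarrow> ('c::linordered_field \<Rightarrow> 'g \<Rightarrow> 'g)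
    \<Rightarrow> ('g \<Rightarrow> 'g \<Rightarrow> bool) \<Rightarrow> ('g \<Rightarrow> 'g \<Rightarrow> bool) \<Rightarrow> ('g \<Rightarrow> 'g option) \<Rightarrow> bool" where
  "hamel_valuation G add zero scal lt0 lt1 v \<longleftrightarrow>
     (\<forall>x\<in>G. v x = None \<or> (\<exists>g\<in>G. v x = Some g)) \<and>
     (\<forall>x\<in>G. v x = None \<longleftrightarrow> x = zero) \<and>
     (\<forall>x\<in>G. \<forall>y\<in>G. inf_le lt0 (v x) (v (add x y)) \<or> inf_le lt0 (v y) (v (add x y))) \<and>
     (\<forall>a::'c. \<forall>x\<in>G. a \<noteq> 0 \<longrightarrow> v (scal a x) = v x) \<and>
     (\<forall>x\<in>G. \<forall>y\<in>G. lt1 zero x \<longrightarrow> lt1 x y \<longrightarrow> inf_le lt0 (v y) (v x)) \<and>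
     (\<forall>x\<in>G. v_ext v (v x) = v x) \<and>
     (\<forall>x\<in>G. inf_less lt1 (Some zero) (v x))"

definition hamel_space ::
  "'g set \<Rightarrow> ('g \<Rightarrow> 'g \<Rightarrow> 'g) \<Rightarrow> 'g \<Rightarrow> ('c::linordered_field \<Rightarrow> 'g \<Rightarrow> 'g)
    \<Rightarrow> ('g \<Rightarrow> 'g \<Rightarrow> bool) \<Rightarrow> ('g \<Rightarrow> 'g \<Rightarrow> bool) \<Rightarrow> ('g \<Rightarrow> 'g option) \<Rightarrow> bool" where
  "hamel_space G add zero scal lt0 lt1 v \<longleftrightarrow>
     ordered_vector_space_on G add zero scal lt0 \<and>
     ordered_vector_space_on G add zero scal lt1 \<and>
     hamel_valuation G add zero scal lt0 lt1 v"

datatype 'g ext = NegInf | Fin 'g | PosInf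

fun ext_less :: "('g \<Rightarrow> 'g \<Rightarrow> bool) \<Rightarrow> 'g ext \<Rightarrow> 'g ext \<Rightarrow> bool" where
  "ext_less lt (Fin a) (Fin b) = lt a b"
| "ext_less lt NegInf b = (b \<noteq> NegInf)"
| "ext_less lt a PosInf = (a \<noteq> PosInf)"
| "ext_less lt _ _ = False"

definition in_ext :: "'g set \<Rightarrow> 'g ext \<Rightarrow> bool" where
  "in_ext G a \<longleftrightarrow> (\<forall>g. a = Fin g \<longrightarrow> g \<in> G)"

definition independent ::
  "'g set \<Rightarrow> ('g \<Rightarrow> 'g \<Rightarrow> bool) \<Rightarrow> ('g \<Rightarrow> 'g \<Rightarrow> bool) \<Rightarrow> bool" where
  "independent G lt0 lt1 \<longleftrightarrow>
     (\<forall>a0 b0 a1 b1. in_ext G a0 \<longrightarrow> in_ext G b0 \<longrightarrow> in_ext G a1 \<longrightarrow> in_ext G b1 \<longrightarrow>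
        ext_less lt0 a0 b0 \<longrightarrow> ext_less lt1 a1 b1 \<longrightarrow>
        (\<exists>z\<in>G. ext_less lt0 a0 (Fin z) \<and> ext_less lt0 (Fin z) b0 \<and>
               ext_less lt1 a1 (Fin z) \<and> ext_less lt1 (Fin z) b1))"

definition dense_hamel ::
  "'g set \<Rightarrow> ('g \<Rightarrow> 'g \<Rightarrow> bool) \<Rightarrow> ('g \<Rightarrow> 'g option) \<Rightarrow> bool" where
  "dense_hamel G lt0 v \<longleftrightarrow>
     (\<forall>a\<in>G. \<forall>b\<in>G. lt0 a b \<longrightarrow>
        (\<exists>c\<in>G. inf_less lt0 (Some a) (v c) \<and> inf_less lt0 (v c) (Some b)))"

definition independent_dense_hamel_space ::
  "'g set \<Rightarrow> ('g \<Rightarrow> 'g \<Rightarrow> 'g) \<Rightarrow> 'g \<Rightarrow> ('c::linordered_field \<Rightarrow> 'g \<Rightarrow> 'g)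
    \<Rightarrow> ('g \<Rightarrow> 'g \<Rightarrow> bool) \<Rightarrow> ('g \<Rightarrow> 'g \<Rightarrow> bool) \<Rightarrow> ('g \<Rightarrow> 'g option) \<Rightarrow> bool" where
  "independent_dense_hamel_space G add zero scal lt0 lt1 v \<longleftrightarrow>
     hamel_space G add zero scal lt0 lt1 v \<and> independent G lt0 lt1 \<and> dense_hamel G lt0 v"

end

(* Take for G the span, inside the sequences C^nat, of vectors b_s indexed by the finite lists s
   over C: b_s starts with s and then continues geometrically with a ratio that codes s
   injectively, so that a Vandermonde argument makes the b_s linearly independent.  The first
   order is lexicographic; x <_1 y holds if, among the basis vectors occurring in y - x, the
   lexicographically least one has a positive coefficient, and v x is that least basis vector.
   Every lexicographic interval contains all sequences with some fixed finite prefix p, hence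
   the basis vector b_p: this gives density.  For independence, given a_0 <_0 b_0 and
   a_1 <_1 b_1, add to a_1 a combination of two basis vectors that realises such a prefix for
   the interval (a_0 - a_1, b_0 - a_1) and whose basis vectors lie lexicographically above the
   leading one of b_1 - a_1, so that it is positive but smaller than b_1 - a_1 for <_1. *)

theory Submission
  imports Defs "HOL-Library.Function_Algebras"
begin

section \<open>Independence from bounded intervals\<close>

lemma
  assumes "ordered_vector_space_on G add zero scal lt" "e \<in> G" "lt zero e" "x \<in> G"
  shows ordered_vector_space_on_no_max: "\<exists>y\<in>G. lt x y"
    and ordered_vector_space_on_no_min: "\<exists>y\<in>G. lt y x"
proof -
  have G: "vector_space_on G add zero scal"
    and mono: "\<And>a b c. a \<in> G \<Longrightarrow> b \<in> G \<Longrightarrow> c \<in> G \<Longrightarrow> lt a b \<Longrightarrow> lt (add a c) (add b c)"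
    using assms(1) unfolding ordered_vector_space_on_def by blast+
  have zero: "zero \<in> G" and closed: "\<And>a b. a \<in> G \<Longrightarrow> b \<in> G \<Longrightarrow> add a b \<in> G"
    and comm: "\<And>a b. a \<in> G \<Longrightarrow> b \<in> G \<Longrightarrow> add a b = add b a"
    and assoc: "\<And>a b c. a \<in> G \<Longrightarrow> b \<in> G \<Longrightarrow> c \<in> G \<Longrightarrow> add (add a b) c = add a (add b c)"
    and neutral: "\<And>a. a \<in> G \<Longrightarrow> add a zero = a"
    using G unfolding vector_space_on_def by meson+
  obtain n where n: "n \<in> G" "add e n = zero"
    using G assms(2) unfolding vector_space_on_def by meson
  have "lt (add zero x) (add e x)"
    using mono assms zero by blast
  with assms(2,4) show "\<exists>y\<in>G. lt x y"
    using zero closed comm neutral by metis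
  have "lt (add zero (add x n)) (add e (add x n))"
    using mono assms zero closed n by blast
  moreover have "add e (add x n) = x"
    using assms(2,4) n comm assoc neutral by metis
  ultimately show "\<exists>y\<in>G. lt y x"
    using assms(4) n zero closed comm neutral by metis
qed

lemma ext_interval_shrink:
  assumes "in_ext G a" "in_ext G b" "ext_less lt a b" "x0 \<in> G"
    and no_max: "\<And>x. x \<in> G \<Longrightarrow> \<exists>y\<in>G. lt x y" and no_min: "\<And>x. x \<in> G \<Longrightarrow> \<exists>y\<in>G. lt y x"
  obtains a' b' where "a' \<in> G" "b' \<in> G" "lt a' b'"
    and "\<And>z. lt a' z \<Longrightarrow> lt z b' \<Longrightarrow> ext_less lt a (Fin z) \<and> ext_less lt (Fin z) b"
proof -
  have "\<exists>a'\<in>G. \<exists>b'\<in>G. lt a' b' \<and> (\<forall>z. lt a' z \<longrightarrow> lt z b' \<longrightarrow> ext_less lt a (Fin z) \<and> ext_less lt (Fin z) b)"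
  proof (cases a; cases b)
    fix y
    assume "a = NegInf" "b = Fin y"
    moreover obtain y' where "y' \<in> G" "lt y' y"
      using no_min[of y] assms(2) \<open>b = Fin y\<close> by (auto simp: in_ext_def)
    ultimately show ?thesis
      using assms(2) by (auto simp: in_ext_def)
  next
    assume "a = NegInf" "b = PosInf"
    moreover obtain y where "y \<in> G" "lt x0 y"
      using no_max assms(4) by blast
    ultimately show ?thesis
      using assms(4) by auto
  next
    fix x
    assume "a = Fin x" "b = PosInf"
    moreover obtain y where "y \<in> G" "lt x y"
      using no_max[of x] assms(1) \<open>a = Fin x\<close> by (auto simp: in_ext_def)
    ultimately show ?thesis
      using assms(1) by (auto simp: in_ext_def)
  qed (use assms(1-3) in \<open>auto simp: in_ext_def\<close>)
  with that show ?thesis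
    by blast
qed

lemma independentI_finite_intervals:
  assumes ovs0: "ordered_vector_space_on G add zero scal lt0"
    and ovs1: "ordered_vector_space_on G add zero scal lt1"
    and "e0 \<in> G" "lt0 zero e0" "e1 \<in> G" "lt1 zero e1"
    and witness: "\<And>a0 b0 a1 b1. a0 \<in> G \<Longrightarrow> b0 \<in> G \<Longrightarrow> a1 \<in> G \<Longrightarrow> b1 \<in> G \<Longrightarrow>
      lt0 a0 b0 \<Longrightarrow> lt1 a1 b1 \<Longrightarrow> \<exists>z\<in>G. lt0 a0 z \<and> lt0 z b0 \<and> lt1 a1 z \<and> lt1 z b1"
  shows "independent G lt0 lt1"
  unfolding independent_def
proof (intro allI impI)
  fix a0 b0 a1 b1
  assume a0: "in_ext G a0" and b0: "in_ext G b0" and a1: "in_ext G a1" and b1: "in_ext G b1"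
    and "ext_less lt0 a0 b0" "ext_less lt1 a1 b1"
  obtain a0' b0' where "a0' \<in> G" "b0' \<in> G" "lt0 a0' b0'"
    and in0: "\<And>z. lt0 a0' z \<Longrightarrow> lt0 z b0' \<Longrightarrow> ext_less lt0 a0 (Fin z) \<and> ext_less lt0 (Fin z) b0"
    by (rule ext_interval_shrink[OF a0 b0 \<open>ext_less lt0 a0 b0\<close> \<open>e0 \<in> G\<close>
          ordered_vector_space_on_no_max[OF ovs0 \<open>e0 \<in> G\<close> \<open>lt0 zero e0\<close>]
          ordered_vector_space_on_no_min[OF ovs0 \<open>e0 \<in> G\<close> \<open>lt0 zero e0\<close>]]) auto
  obtain a1' b1' where "a1' \<in> G" "b1' \<in> G" "lt1 a1' b1'"
    and in1: "\<And>z. lt1 a1' z \<Longrightarrow> lt1 z b1' \<Longrightarrow> ext_less lt1 a1 (Fin z) \<and> ext_less lt1 (Fin z) b1"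
    by (rule ext_interval_shrink[OF a1 b1 \<open>ext_less lt1 a1 b1\<close> \<open>e1 \<in> G\<close>
          ordered_vector_space_on_no_max[OF ovs1 \<open>e1 \<in> G\<close> \<open>lt1 zero e1\<close>]
          ordered_vector_space_on_no_min[OF ovs1 \<open>e1 \<in> G\<close> \<open>lt1 zero e1\<close>]]) auto
  from witness[OF \<open>a0' \<in> G\<close> \<open>b0' \<in> G\<close> \<open>a1' \<in> G\<close> \<open>b1' \<in> G\<close> \<open>lt0 a0' b0'\<close> \<open>lt1 a1' b1'\<close>]
  show "\<exists>z\<in>G. ext_less lt0 a0 (Fin z) \<and> ext_less lt0 (Fin z) b0 \<and>
      ext_less lt1 a1 (Fin z) \<and> ext_less lt1 (Fin z) b1"
    using in0 in1 by blast
qed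

section \<open>The lexicographic order on sequences\<close>

definition lex_less :: "(nat \<Rightarrow> 'a::linorder) \<Rightarrow> (nat \<Rightarrow> 'a) \<Rightarrow> bool" where
  "lex_less x y \<longleftrightarrow> (\<exists>n. (\<forall>m<n. x m = y m) \<and> x n < y n)"

lemma lex_less_irrefl: "\<not> lex_less x x"
  by (auto simp: lex_less_def)

lemma lex_less_trans: "lex_less x y \<Longrightarrow> lex_less y z \<Longrightarrow> lex_less x z"
  unfolding lex_less_def by (metis (full_types) dual_order.strict_trans linorder_neqE_nat)

lemma lex_less_total: "x \<noteq> y \<Longrightarrow> lex_less x y \<or> lex_less y x"
proof -
  assume "x \<noteq> y"
  then have ex: "\<exists>n. x n \<noteq> y n"
    by auto
  define n where "n = (LEAST n. x n \<noteq> y n)"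
  have "x n \<noteq> y n" "\<forall>m<n. x m = y m"
    unfolding n_def using LeastI_ex[OF ex] not_less_Least by auto
  then show ?thesis
    unfolding lex_less_def by (metis linorder_neq_iff)
qed

lemma strict_total_order_lex_less: "strict_total_order_on A lex_less"
  unfolding strict_total_order_on_def using lex_less_irrefl lex_less_trans lex_less_total by blast

lemma lex_less_diff_iff:
  fixes x y z :: "nat \<Rightarrow> 'a::linordered_ab_group_add"
  shows "lex_less (x - z) (y - z) \<longleftrightarrow> lex_less x y"
  by (simp add: lex_less_def)

lemma lex_less_add_right:
  fixes x y z :: "nat \<Rightarrow> 'a::linordered_ab_group_add"
  shows "lex_less x y \<Longrightarrow> lex_less (x + z) (y + z)"
  by (simp add: lex_less_def)

lemma lex_less_scale:
  fixes x y :: "nat \<Rightarrow> 'a::linordered_field"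
  shows "0 < a \<Longrightarrow> lex_less x y \<Longrightarrow> lex_less (\<lambda>n. a * x n) (\<lambda>n. a * y n)"
  by (auto simp: lex_less_def)

lemma ordered_vector_space_lex_less:
  fixes G :: "(nat \<Rightarrow> 'a::linordered_field) set"
  assumes "vector_space_on G (+) 0 (\<lambda>a x n. a * x n)"
  shows "ordered_vector_space_on G (+) 0 (\<lambda>a x n. a * x n) lex_less"
  unfolding ordered_vector_space_on_def
  using assms strict_total_order_lex_less lex_less_add_right lex_less_scale by blast

lemma lex_interval_contains_cylinder:
  fixes c e :: "nat \<Rightarrow> 'a::{linorder, dense_order}"
  assumes "lex_less c e"
  obtains p where "p \<noteq> []" and "\<And>w. \<forall>k<length p. w k = p ! k \<Longrightarrow> lex_less c w \<and> lex_less w e"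
proof -
  obtain j where j: "\<forall>m<j. c m = e m" "c j < e j"
    using assms lex_less_def by blast
  then obtain mid where mid: "c j < mid" "mid < e j"
    using dense by blast
  define p where "p = map c [0..<j] @ [mid]"
  have "lex_less c w \<and> lex_less w e" if w: "\<forall>k<length p. w k = p ! k" for w
  proof -
    have "w k = c k" if "k < j" for k
      using w that by (auto simp: p_def nth_append)
    moreover have "w j = mid"
      using w by (auto simp: p_def nth_append)
    ultimately show ?thesis
      unfolding lex_less_def using j mid by (metis order.strict_trans)
  qed
  moreover have "p \<noteq> []"
    by (simp add: p_def)
  ultimately show ?thesis
    using that by blast
qed

section \<open>Leading coefficients\<close>

definition coeff_supp :: "('i \<Rightarrow> 'a::zero) \<Rightarrow> 'i set" where
  "coeff_supp l = {s. l s \<noteq> 0}"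

lemma finite_coeff_supp_add:
  fixes l m :: "'i \<Rightarrow> 'a::ab_group_add"
  assumes "finite (coeff_supp l)" "finite (coeff_supp m)"
  shows "finite (coeff_supp (l + m))" and "finite (coeff_supp (l - m))"
  by (rule finite_subset[of _ "coeff_supp l \<union> coeff_supp m"]; use assms in \<open>auto simp: coeff_supp_def\<close>)+

lemma finite_coeff_supp_scale:
  fixes l :: "'i \<Rightarrow> 'a::mult_zero"
  shows "finite (coeff_supp l) \<Longrightarrow> finite (coeff_supp (\<lambda>s. a * l s))"
  by (rule finite_subset[of _ "coeff_supp l"]) (auto simp: coeff_supp_def)

definition leading_index :: "('i \<Rightarrow> 'i \<Rightarrow> bool) \<Rightarrow> ('i \<Rightarrow> 'a::zero) \<Rightarrow> 'i \<Rightarrow> bool" where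
  "leading_index lt l i \<longleftrightarrow> l i \<noteq> 0 \<and> (\<forall>j. l j \<noteq> 0 \<longrightarrow> j \<noteq> i \<longrightarrow> lt i j)"

definition leading_pos :: "('i \<Rightarrow> 'i \<Rightarrow> bool) \<Rightarrow> ('i \<Rightarrow> 'a::{zero, ord}) \<Rightarrow> bool" where
  "leading_pos lt l \<longleftrightarrow> (\<exists>i. leading_index lt l i \<and> 0 < l i)"

lemma leading_index_le: "leading_index lt l i \<Longrightarrow> l j \<noteq> 0 \<Longrightarrow> j = i \<or> lt i j"
  by (auto simp: leading_index_def)

lemma leading_index_scale:
  fixes l :: "'i \<Rightarrow> 'a::ring_no_zero_divisors"
  shows "a \<noteq> 0 \<Longrightarrow> leading_index lt (\<lambda>s. a * l s) i \<longleftrightarrow> leading_index lt l i"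
  by (simp add: leading_index_def)

lemma leading_index_uminus:
  fixes l :: "'i \<Rightarrow> 'a::ab_group_add"
  shows "leading_index lt (- l) i \<longleftrightarrow> leading_index lt l i"
  by (simp add: leading_index_def fun_Compl_def)

lemma not_leading_pos_zero: "\<not> leading_pos lt (0 :: 'i \<Rightarrow> 'a::{zero, preorder})"
  by (simp add: leading_pos_def leading_index_def)

lemma leading_pos_scale:
  fixes l :: "'i \<Rightarrow> 'a::linordered_ring_strict"
  shows "0 < a \<Longrightarrow> leading_pos lt l \<Longrightarrow> leading_pos lt (\<lambda>s. a * l s)"
  by (auto simp: leading_pos_def leading_index_scale)

context
  fixes lt :: "'i \<Rightarrow> 'i \<Rightarrow> bool"
  assumes order: "strict_total_order_on UNIV lt"
begin

private lemma lt_irrefl: "\<not> lt i i"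
  and lt_trans: "lt i j \<Longrightarrow> lt j k \<Longrightarrow> lt i k"
  and lt_total: "i \<noteq> j \<Longrightarrow> lt i j \<or> lt j i"
  using order unfolding strict_total_order_on_def by blast+

lemma leading_index_unique: "leading_index lt l i \<Longrightarrow> leading_index lt l j \<Longrightarrow> i = j"
  unfolding leading_index_def using lt_irrefl lt_trans by blast

lemma leading_index_below_zero: "leading_index lt m j \<Longrightarrow> lt i j \<Longrightarrow> m i = 0"
  using leading_index_le[of lt m j i] lt_irrefl lt_trans by blast

lemma leading_pos_iff: "leading_index lt l i \<Longrightarrow> leading_pos lt l \<longleftrightarrow> 0 < l i"
  using leading_index_unique by (auto simp: leading_pos_def)

lemma leading_index_exists:
  assumes "finite (coeff_supp l)" "l \<noteq> 0"
  shows "\<exists>i. leading_index lt l i"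
proof -
  let ?R = "{(i, j). i \<in> coeff_supp l \<and> j \<in> coeff_supp l \<and> lt i j}"
  have "?R\<^sup>+ = ?R"
    using order unfolding strict_total_order_on_def by (intro trancl_id transI) blast
  then have "acyclic ?R"
    using order unfolding acyclic_irrefl irrefl_def strict_total_order_on_def by auto
  moreover have "finite ?R"
    by (rule finite_subset[of _ "coeff_supp l \<times> coeff_supp l"]) (use assms(1) in auto)
  ultimately have "wf ?R"
    by (rule finite_acyclic_wf[rotated])
  moreover obtain j where "j \<in> coeff_supp l"
    using assms(2) by (auto simp: coeff_supp_def fun_eq_iff)
  ultimately obtain i where "i \<in> coeff_supp l" "\<And>j. (j, i) \<in> ?R \<Longrightarrow> j \<notin> coeff_supp l"
    using wfE_min[of ?R j "coeff_supp l"] by blast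
  then have "leading_index lt l i"
    using order unfolding leading_index_def strict_total_order_on_def coeff_supp_def by blast
  then show ?thesis ..
qed

lemma leading_pos_or_neg:
  fixes l :: "'i \<Rightarrow> 'a::linordered_ab_group_add"
  assumes "finite (coeff_supp l)" "l \<noteq> 0"
  shows "leading_pos lt l \<or> leading_pos lt (- l)"
proof -
  obtain i where i: "leading_index lt l i"
    using leading_index_exists[OF assms] ..
  then have "l i \<noteq> 0" "leading_index lt (- l) i"
    by (simp_all add: leading_index_def leading_index_uminus)
  with i show ?thesis
    unfolding leading_pos_def by (metis fun_Compl_def neg_0_less_iff_less linorder_neqE)
qed

lemma leading_pos_add:
  fixes l m :: "'i \<Rightarrow> 'a::linordered_ab_group_add"
  assumes "leading_pos lt l" "leading_pos lt m"
  shows "leading_pos lt (l + m)"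
proof -
  have *: "leading_pos lt (l + m)"
    if l: "leading_index lt l i" "0 < l i" and m: "leading_index lt m j" "0 < m j"
      and ij: "i = j \<or> lt i j" for l m :: "'i \<Rightarrow> 'a" and i j
  proof -
    have "0 \<le> m i"
    proof (cases "m i = 0")
      case False
      then have "i = j \<or> lt j i"
        using leading_index_le[OF m(1)] by blast
      with ij have "i = j"
        using lt_irrefl lt_trans by blast
      with m show ?thesis
        by simp
    qed simp
    with l have "0 < (l + m) i"
      by (simp add: add_pos_nonneg)
    moreover have "k = i \<or> lt i k" if "(l + m) k \<noteq> 0" for k
    proof -
      have "l k \<noteq> 0 \<or> m k \<noteq> 0"
        using that by auto
      then have "k = i \<or> lt i k \<or> k = j \<or> lt j k"
        using leading_index_le[OF l(1)] leading_index_le[OF m(1)] by blast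
      with ij show ?thesis
        using lt_trans by blast
    qed
    ultimately show ?thesis
      unfolding leading_pos_def leading_index_def by (metis less_irrefl)
  qed
  obtain i j where "leading_index lt l i" "0 < l i" "leading_index lt m j" "0 < m j"
    using assms by (auto simp: leading_pos_def)
  with *[of l i m j] *[of m j l i] lt_total[of i j] show ?thesis
    by (metis add.commute)
qed

lemma leading_index_diff:
  fixes l m :: "'i \<Rightarrow> 'a::ab_group_add"
  assumes l: "leading_index lt l i" and m: "leading_index lt m j" and "lt i j"
  shows "leading_index lt (l - m) i"
proof -
  have "m i = 0"
    using leading_index_below_zero m \<open>lt i j\<close> by blast
  moreover have "k = i \<or> lt i k" if "(l - m) k \<noteq> 0" for k
  proof -
    have "l k \<noteq> 0 \<or> m k \<noteq> 0"
      using that by auto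
    then show ?thesis
      using leading_index_le[OF l, of k] leading_index_le[OF m, of k] \<open>lt i j\<close> lt_trans by blast
  qed
  ultimately show ?thesis
    using l by (auto simp: leading_index_def)
qed

lemma leading_pos_diff:
  fixes l m :: "'i \<Rightarrow> 'a::linordered_ab_group_add"
  assumes "leading_index lt l i" "0 < l i" "leading_index lt m j" "lt i j"
  shows "leading_pos lt (l - m)"
  using assms leading_index_diff leading_index_below_zero unfolding leading_pos_def by fastforce

lemma leading_index_antimono:
  fixes l m :: "'i \<Rightarrow> 'a::linordered_ab_group_add"
  assumes l: "leading_index lt l i" "0 < l i" and m: "leading_index lt m j"
    and "leading_pos lt (m - l)"
  shows "j = i \<or> lt j i"
proof (rule ccontr)
  assume "\<not> (j = i \<or> lt j i)"
  then have "lt i j"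
    using lt_total by blast
  then have "leading_index lt (l - m) i"
    using leading_index_diff l m by blast
  then have "leading_index lt (m - l) i"
    using leading_index_uminus[of lt "l - m" i] by simp
  then have "0 < m i - l i"
    using leading_pos_iff \<open>leading_pos lt (m - l)\<close> by fastforce
  moreover have "m i = 0"
    using leading_index_below_zero m \<open>lt i j\<close> by blast
  ultimately show False
    using l by simp
qed

end

section \<open>A linearly independent family of sequences\<close>

lemma geometric_sequences_independent:
  fixes r :: "'a \<Rightarrow> 'c::idom"
  assumes "finite F" "inj_on r F" "\<And>s. s \<in> F \<Longrightarrow> r s \<noteq> 0"
    and "\<And>n. n \<ge> N \<Longrightarrow> (\<Sum>s\<in>F. \<mu> s * r s ^ n) = 0"
  shows "\<forall>s\<in>F. \<mu> s = 0"
  using assms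
proof (induction F arbitrary: \<mu> rule: finite_induct)
  case empty
  then show ?case by simp
next
  case (insert t F)
  have split: "(\<Sum>s\<in>F. \<mu> s * r s ^ n) = - (\<mu> t * r t ^ n)" if "n \<ge> N" for n
    using insert.prems(3)[OF that] insert.hyps by (simp add: eq_neg_iff_add_eq_0 add.commute)
  \<comment> \<open>Shifting n by one and subtracting r t times the relation eliminates t.\<close>
  have "(\<Sum>s\<in>F. (\<mu> s * (r s - r t)) * r s ^ n) = 0" if "n \<ge> N" for n
  proof -
    have "(\<Sum>s\<in>F. (\<mu> s * (r s - r t)) * r s ^ n)
        = (\<Sum>s\<in>F. \<mu> s * r s ^ Suc n) - r t * (\<Sum>s\<in>F. \<mu> s * r s ^ n)"
      by (simp add: sum_subtractf sum_distrib_left algebra_simps)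
    also have "\<dots> = 0"
      using split[of n] split[of "Suc n"] that by (simp add: algebra_simps)
    finally show ?thesis .
  qed
  with insert.prems have "\<forall>s\<in>F. \<mu> s * (r s - r t) = 0"
    by (intro insert.IH) auto
  moreover have "r s \<noteq> r t" if "s \<in> F" for s
    using that insert.prems(1) insert.hyps(2) by (auto simp: inj_on_def)
  ultimately have on_F: "\<forall>s\<in>F. \<mu> s = 0"
    by auto
  then have "\<mu> t * r t ^ N = 0"
    using split[of N] by simp
  with insert.prems(2) have "\<mu> t = 0"
    by simp
  with on_F show ?case
    by simp
qed

lemma inj_pair_code_exists:
  assumes "infinite (UNIV :: 'a set)"
  shows "\<exists>p :: 'a \<times> 'a \<Rightarrow> 'a. inj p"
proof -
  have "(card_of ((UNIV :: 'a set) \<times> (UNIV :: 'a set)), card_of (UNIV :: 'a set)) \<in> ordIso"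
    using assms by (rule card_of_Times_same_infinite)
  then obtain p where "bij_betw p ((UNIV :: 'a set) \<times> (UNIV :: 'a set)) (UNIV :: 'a set)"
    using card_of_ordIso by blast
  then show ?thesis
    using bij_betw_imp_inj_on by fastforce
qed

definition nonzero_shift :: "'a::linordered_idom \<Rightarrow> 'a" where
  "nonzero_shift y = (if 0 \<le> y then y + 1 else y)"

lemma nonzero_shift_nonzero: "nonzero_shift y \<noteq> 0"
  unfolding nonzero_shift_def by (auto simp: add_nonneg_eq_0_iff)

lemma inj_nonzero_shift: "inj nonzero_shift"
  unfolding nonzero_shift_def inj_def by (auto split: if_splits)

primrec list_code :: "('a::linordered_idom \<times> 'a \<Rightarrow> 'a) \<Rightarrow> 'a list \<Rightarrow> 'a" where
  "list_code p [] = 0"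
| "list_code p (x # xs) = nonzero_shift (p (x, list_code p xs))"

lemma inj_list_code:
  assumes "inj p"
  shows "inj (list_code p)"
proof
  show "xs = ys" if "list_code p xs = list_code p ys" for xs ys
    using that
  proof (induction xs arbitrary: ys)
    case Nil
    then show ?case
      by (cases ys) (auto dest: sym simp: nonzero_shift_nonzero)
  next
    case (Cons x xs)
    then show ?case
      using assms by (cases ys) (auto simp: nonzero_shift_nonzero inj_eq inj_nonzero_shift)
  qed
qed

lemma nonzero_list_code_exists:
  "\<exists>f :: 'a::linordered_idom list \<Rightarrow> 'a. inj f \<and> (\<forall>s. f s \<noteq> 0)"
proof -
  obtain p :: "'a \<times> 'a \<Rightarrow> 'a" where "inj p"
    using inj_pair_code_exists[OF infinite_UNIV_char_0] by blast
  then have "inj (nonzero_shift \<circ> list_code p)"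
    by (intro inj_compose inj_nonzero_shift inj_list_code)
  moreover have "\<forall>s. (nonzero_shift \<circ> list_code p) s \<noteq> 0"
    by (simp add: nonzero_shift_nonzero)
  ultimately show ?thesis
    by blast
qed

definition tail_ratio :: "'a::linordered_idom list \<Rightarrow> 'a" where
  "tail_ratio = (SOME f. inj f \<and> (\<forall>s. f s \<noteq> 0))"

lemma inj_tail_ratio: "inj tail_ratio"
  and tail_ratio_nonzero: "tail_ratio s \<noteq> 0"
  using someI_ex[OF nonzero_list_code_exists] unfolding tail_ratio_def by auto

definition basis_seq :: "'a::linordered_idom list \<Rightarrow> nat \<Rightarrow> 'a" where
  "basis_seq s n = (if n < length s then s ! n else tail_ratio s ^ n)"

lemma basis_seq_prefix: "n < length s \<Longrightarrow> basis_seq s n = s ! n"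
  by (simp add: basis_seq_def)

lemma basis_seqs_independent:
  fixes \<mu> :: "'a::linordered_idom list \<Rightarrow> 'a"
  assumes "finite F" "\<And>n. (\<Sum>s\<in>F. \<mu> s * basis_seq s n) = 0"
  shows "\<forall>s\<in>F. \<mu> s = 0"
proof (rule geometric_sequences_independent)
  define N where "N = Max (length ` F)"
  show "(\<Sum>s\<in>F. \<mu> s * tail_ratio s ^ n) = 0" if "n \<ge> N" for n
  proof -
    have "basis_seq s n = tail_ratio s ^ n" if "s \<in> F" for s
    proof -
      have "length s \<le> N"
        using that assms(1) by (simp add: N_def)
      with \<open>n \<ge> N\<close> show ?thesis
        by (simp add: basis_seq_def)
    qed
    then show ?thesis
      using assms(2)[of n] by simp
  qed
qed (use assms(1) inj_tail_ratio tail_ratio_nonzero in \<open>auto intro: inj_on_subset\<close>)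

definition lincomb :: "('a::linordered_idom list \<Rightarrow> 'a) \<Rightarrow> nat \<Rightarrow> 'a" where
  "lincomb l n = (\<Sum>s\<in>coeff_supp l. l s * basis_seq s n)"

lemma lincomb_eq_sum:
  assumes "finite F" "coeff_supp l \<subseteq> F"
  shows "lincomb l n = (\<Sum>s\<in>F. l s * basis_seq s n)"
  unfolding lincomb_def
  by (rule sum.mono_neutral_left) (use assms in \<open>auto simp: coeff_supp_def\<close>)

lemma lincomb_add:
  assumes "finite (coeff_supp l)" "finite (coeff_supp m)"
  shows "lincomb (l + m) = lincomb l + lincomb m" and "lincomb (l - m) = lincomb l - lincomb m"
proof -
  let ?F = "coeff_supp l \<union> coeff_supp m"
  have "coeff_supp (l + m) \<subseteq> ?F" "coeff_supp (l - m) \<subseteq> ?F"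
    by (auto simp: coeff_supp_def)
  then show "lincomb (l + m) = lincomb l + lincomb m" "lincomb (l - m) = lincomb l - lincomb m"
    using assms
    by (simp_all add: fun_eq_iff lincomb_eq_sum[of ?F] sum.distrib sum_subtractf algebra_simps)
qed

lemma lincomb_scale: "lincomb (\<lambda>s. a * l s) = (\<lambda>n. a * lincomb l n)"
proof (cases "a = 0")
  case True
  then show ?thesis
    by (simp add: lincomb_def coeff_supp_def fun_eq_iff)
next
  case False
  then have "coeff_supp (\<lambda>s. a * l s) = coeff_supp l"
    by (simp add: coeff_supp_def)
  then show ?thesis
    by (simp add: lincomb_def fun_eq_iff sum_distrib_left mult.assoc)
qed

lemma lincomb_eq_zero_iff:
  fixes l :: "'a::linordered_idom list \<Rightarrow> 'a"
  assumes "finite (coeff_supp l)"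
  shows "lincomb l = 0 \<longleftrightarrow> l = 0"
proof
  assume "lincomb l = 0"
  then have "\<forall>s\<in>coeff_supp l. l s = 0"
    using assms by (intro basis_seqs_independent) (auto simp: lincomb_def fun_eq_iff)
  then show "l = 0"
    by (auto simp: coeff_supp_def)
qed (simp add: lincomb_def coeff_supp_def fun_eq_iff)

lemma inj_on_lincomb:
  "inj_on (lincomb :: ('a::linordered_idom list \<Rightarrow> 'a) \<Rightarrow> _) {l. finite (coeff_supp l)}"
proof
  fix l m :: "'a list \<Rightarrow> 'a"
  assume fin: "l \<in> {l. finite (coeff_supp l)}" "m \<in> {l. finite (coeff_supp l)}"
    and "lincomb l = lincomb m"
  then have "lincomb (l - m) = 0"
    by (simp add: lincomb_add)
  with fin show "l = m"
    by (simp add: lincomb_eq_zero_iff finite_coeff_supp_add)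
qed

section \<open>The Hamel space\<close>

definition hamel_seqs :: "(nat \<Rightarrow> 'a::linordered_field) set" where
  "hamel_seqs = lincomb ` {l. finite (coeff_supp l)}"

definition coeffs :: "(nat \<Rightarrow> 'a::linordered_field) \<Rightarrow> 'a list \<Rightarrow> 'a" where
  "coeffs = the_inv_into {l. finite (coeff_supp l)} lincomb"

lemma lincomb_in_hamel_seqs: "finite (coeff_supp l) \<Longrightarrow> lincomb l \<in> hamel_seqs"
  by (simp add: hamel_seqs_def)

lemma coeffs_lincomb: "finite (coeff_supp l) \<Longrightarrow> coeffs (lincomb l) = l"
  unfolding coeffs_def by (simp add: the_inv_into_f_f inj_on_lincomb)

lemma
  assumes "x \<in> hamel_seqs"
  shows finite_coeff_supp_coeffs: "finite (coeff_supp (coeffs x))"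
    and lincomb_coeffs: "lincomb (coeffs x) = x"
  using assms the_inv_into_into[OF inj_on_lincomb] f_the_inv_into_f[OF inj_on_lincomb]
  unfolding hamel_seqs_def coeffs_def by auto

lemma
  assumes "x \<in> hamel_seqs" "y \<in> hamel_seqs"
  shows add_in_hamel_seqs: "x + y \<in> hamel_seqs"
    and diff_in_hamel_seqs: "x - y \<in> hamel_seqs"
    and coeffs_add: "coeffs (x + y) = coeffs x + coeffs y"
    and coeffs_diff: "coeffs (x - y) = coeffs x - coeffs y"
proof -
  have fin: "finite (coeff_supp (coeffs x))" "finite (coeff_supp (coeffs y))"
    using assms by (simp_all add: finite_coeff_supp_coeffs)
  have "x + y = lincomb (coeffs x + coeffs y)" "x - y = lincomb (coeffs x - coeffs y)"
    using assms fin by (simp_all add: lincomb_add lincomb_coeffs)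
  with fin show "x + y \<in> hamel_seqs" "x - y \<in> hamel_seqs"
    "coeffs (x + y) = coeffs x + coeffs y" "coeffs (x - y) = coeffs x - coeffs y"
    by (simp_all add: lincomb_in_hamel_seqs coeffs_lincomb finite_coeff_supp_add)
qed

lemma
  assumes "x \<in> hamel_seqs"
  shows scale_in_hamel_seqs: "(\<lambda>n. a * x n) \<in> hamel_seqs"
    and coeffs_scale: "coeffs (\<lambda>n. a * x n) = (\<lambda>s. a * coeffs x s)"
proof -
  have fin: "finite (coeff_supp (coeffs x))"
    using assms by (rule finite_coeff_supp_coeffs)
  have "(\<lambda>n. a * x n) = lincomb (\<lambda>s. a * coeffs x s)"
    using assms by (simp add: lincomb_scale lincomb_coeffs)
  with fin show "(\<lambda>n. a * x n) \<in> hamel_seqs" "coeffs (\<lambda>n. a * x n) = (\<lambda>s. a * coeffs x s)"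
    by (simp_all add: lincomb_in_hamel_seqs coeffs_lincomb finite_coeff_supp_scale)
qed

lemma zero_in_hamel_seqs: "0 \<in> (hamel_seqs :: (nat \<Rightarrow> 'a::linordered_field) set)"
  and coeffs_zero: "coeffs (0 :: nat \<Rightarrow> 'a) = 0"
proof -
  have "finite (coeff_supp (0 :: 'a::linordered_field list \<Rightarrow> 'a))" "lincomb 0 = (0 :: nat \<Rightarrow> 'a)"
    by (simp_all add: coeff_supp_def lincomb_eq_zero_iff)
  then show "0 \<in> (hamel_seqs :: (nat \<Rightarrow> 'a) set)" "coeffs (0 :: nat \<Rightarrow> 'a) = 0"
    by (metis lincomb_in_hamel_seqs coeffs_lincomb)+
qed

lemma coeffs_eq_zero_iff: "x \<in> hamel_seqs \<Longrightarrow> coeffs x = 0 \<longleftrightarrow> x = 0"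
  using coeffs_zero lincomb_coeffs lincomb_eq_zero_iff finite_coeff_supp_coeffs by metis

lemma basis_seq_in_hamel_seqs: "basis_seq s \<in> hamel_seqs"
  and coeffs_basis_seq: "coeffs (basis_seq s) = (\<lambda>t. if t = s then 1 else 0)"
proof -
  let ?\<delta> = "\<lambda>t. if t = s then 1 else (0 :: 'a::linordered_field)"
  have "coeff_supp ?\<delta> = {s}"
    by (auto simp: coeff_supp_def)
  then have "finite (coeff_supp ?\<delta>)" "lincomb ?\<delta> = basis_seq s"
    by (simp_all add: lincomb_def fun_eq_iff)
  then show "basis_seq s \<in> hamel_seqs" "coeffs (basis_seq s) = ?\<delta>"
    by (metis lincomb_in_hamel_seqs coeffs_lincomb)+
qed

lemma inj_basis_seq: "inj (basis_seq :: 'a::linordered_field list \<Rightarrow> _)"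
proof
  fix s t :: "'a list"
  assume "basis_seq s = basis_seq t"
  then have "coeffs (basis_seq s) s = coeffs (basis_seq t) s"
    by simp
  then show "s = t"
    by (simp add: coeffs_basis_seq split: if_splits)
qed

lemma vector_space_hamel_seqs:
  "vector_space_on (hamel_seqs :: (nat \<Rightarrow> 'a::linordered_field) set) (+) 0 (\<lambda>a x n. a * x n)"
  unfolding vector_space_on_def
proof (intro conjI ballI allI)
  fix x :: "nat \<Rightarrow> 'a"
  assume "x \<in> hamel_seqs"
  then show "\<exists>y\<in>hamel_seqs. x + y = 0"
    using diff_in_hamel_seqs[OF zero_in_hamel_seqs] by (intro bexI[of _ "0 - x"]) auto
qed (auto simp: zero_in_hamel_seqs add_in_hamel_seqs scale_in_hamel_seqs algebra_simps)

definition basis_lex_less :: "'a::linordered_field list \<Rightarrow> 'a list \<Rightarrow> bool" where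
  "basis_lex_less s t \<longleftrightarrow> lex_less (basis_seq s) (basis_seq t)"

lemma strict_total_order_basis_lex_less: "strict_total_order_on UNIV basis_lex_less"
  unfolding strict_total_order_on_def basis_lex_less_def
  using lex_less_irrefl lex_less_trans lex_less_total inj_eq[OF inj_basis_seq] by metis

definition lead_less :: "(nat \<Rightarrow> 'a::linordered_field) \<Rightarrow> (nat \<Rightarrow> 'a) \<Rightarrow> bool" where
  "lead_less x y \<longleftrightarrow> leading_pos basis_lex_less (coeffs (y - x))"

definition lead_index :: "(nat \<Rightarrow> 'a::linordered_field) \<Rightarrow> 'a list" where
  "lead_index x = (THE s. leading_index basis_lex_less (coeffs x) s)"

definition hamel_val :: "(nat \<Rightarrow> 'a::linordered_field) \<Rightarrow> (nat \<Rightarrow> 'a) option" where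
  "hamel_val x = (if x = 0 then None else Some (basis_seq (lead_index x)))"

lemma lead_index_eqI: "leading_index basis_lex_less (coeffs x) s \<Longrightarrow> lead_index x = s"
  unfolding lead_index_def
  using leading_index_unique[OF strict_total_order_basis_lex_less] by blast

lemma leading_index_lead_index:
  assumes "x \<in> hamel_seqs" "x \<noteq> 0"
  shows "leading_index basis_lex_less (coeffs x) (lead_index x)"
proof -
  obtain s where "leading_index basis_lex_less (coeffs x) s"
    using leading_index_exists[OF strict_total_order_basis_lex_less] assms
    by (metis finite_coeff_supp_coeffs coeffs_eq_zero_iff)
  then show ?thesis
    by (simp add: lead_index_eqI)
qed

lemma lead_less_iff:
  "x \<in> hamel_seqs \<Longrightarrow> y \<in> hamel_seqs \<Longrightarrow> lead_less x y \<longleftrightarrow> leading_pos basis_lex_less (coeffs y - coeffs x)"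
  by (simp add: lead_less_def coeffs_diff)

lemma leading_index_basis_seq: "leading_index basis_lex_less (coeffs (basis_seq s)) s"
  by (simp add: leading_index_def coeffs_basis_seq)

lemma lead_less_zero_basis_seq: "lead_less 0 (basis_seq s)"
  using leading_index_basis_seq[of s] unfolding lead_less_def leading_pos_def
  by (auto simp: coeffs_basis_seq)

lemma lead_less_irrefl: "\<not> lead_less x x"
  by (simp add: lead_less_def coeffs_zero not_leading_pos_zero)

lemma lead_less_trans:
  assumes "x \<in> hamel_seqs" "y \<in> hamel_seqs" "z \<in> hamel_seqs" "lead_less x y" "lead_less y z"
  shows "lead_less x z"
proof -
  have "coeffs z - coeffs x = (coeffs z - coeffs y) + (coeffs y - coeffs x)"
    by simp
  then show ?thesis
    using assms leading_pos_add[OF strict_total_order_basis_lex_less] by (metis lead_less_iff)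
qed

lemma lead_less_total:
  assumes x: "x \<in> hamel_seqs" and y: "y \<in> hamel_seqs" and "x \<noteq> y"
  shows "lead_less x y \<or> lead_less y x"
proof -
  have "coeffs y - coeffs x \<noteq> 0"
    using assms by (metis coeffs_diff coeffs_eq_zero_iff diff_in_hamel_seqs eq_iff_diff_eq_0)
  moreover have "finite (coeff_supp (coeffs y - coeffs x))"
    using x y by (simp add: finite_coeff_supp_add finite_coeff_supp_coeffs)
  ultimately have "leading_pos basis_lex_less (coeffs y - coeffs x) \<or>
      leading_pos basis_lex_less (coeffs x - coeffs y)"
    using leading_pos_or_neg[OF strict_total_order_basis_lex_less] by fastforce
  then show ?thesis
    using x y by (simp add: lead_less_iff)
qed

lemma lead_less_add_right: "lead_less x y \<Longrightarrow> lead_less (x + z) (y + z)"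
  by (simp add: lead_less_def)

lemma lead_less_scale:
  assumes "x \<in> hamel_seqs" "y \<in> hamel_seqs" "0 < a" "lead_less x y"
  shows "lead_less (\<lambda>n. a * x n) (\<lambda>n. a * y n)"
proof -
  have "(\<lambda>n. a * y n) - (\<lambda>n. a * x n) = (\<lambda>n. a * (y - x) n)"
    by (simp add: fun_eq_iff right_diff_distrib)
  then have "coeffs ((\<lambda>n. a * y n) - (\<lambda>n. a * x n)) = (\<lambda>s. a * coeffs (y - x) s)"
    using coeffs_scale diff_in_hamel_seqs assms(1,2) by metis
  then show ?thesis
    using assms(3,4) unfolding lead_less_def by (simp add: leading_pos_scale)
qed

lemma ordered_vector_space_lead_less:
  "ordered_vector_space_on (hamel_seqs :: (nat \<Rightarrow> 'a::linordered_field) set) (+) 0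
     (\<lambda>a x n. a * x n) lead_less"
  unfolding ordered_vector_space_on_def strict_total_order_on_def
proof (intro conjI)
  show "\<forall>x\<in>hamel_seqs. \<forall>y\<in>hamel_seqs. \<forall>z\<in>hamel_seqs.
      lead_less x y \<longrightarrow> lead_less y z \<longrightarrow> lead_less x (z :: nat \<Rightarrow> 'a)"
    using lead_less_trans by blast
  show "\<forall>x\<in>hamel_seqs. \<forall>y\<in>hamel_seqs. x \<noteq> y \<longrightarrow> lead_less x y \<or> lead_less y (x :: nat \<Rightarrow> 'a)"
    using lead_less_total by blast
  show "\<forall>a::'a. \<forall>x\<in>hamel_seqs. \<forall>y\<in>hamel_seqs.
      0 < a \<longrightarrow> lead_less x y \<longrightarrow> lead_less (\<lambda>n. a * x n) (\<lambda>n. a * y n)"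
    using lead_less_scale by blast
qed (simp_all add: vector_space_hamel_seqs lead_less_irrefl lead_less_add_right)

lemma hamel_val_le:
  assumes "x \<in> hamel_seqs" "coeffs x s \<noteq> 0"
  shows "inf_le lex_less (hamel_val x) (Some (basis_seq s))"
proof -
  have "x \<noteq> 0"
    using assms(2) by (auto simp: coeffs_zero)
  then have "s = lead_index x \<or> basis_lex_less (lead_index x) s"
    using leading_index_le[OF leading_index_lead_index[OF assms(1)]] assms(2) by blast
  with \<open>x \<noteq> 0\<close> show ?thesis
    by (auto simp: hamel_val_def inf_le_def basis_lex_less_def)
qed

lemma hamel_val_ultrametric:
  assumes "x \<in> hamel_seqs" "y \<in> hamel_seqs"
  shows "inf_le lex_less (hamel_val x) (hamel_val (x + y)) \<or> inf_le lex_less (hamel_val y) (hamel_val (x + y))"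
proof (cases "x + y = 0")
  case True
  then show ?thesis
    by (cases "hamel_val x") (auto simp: hamel_val_def inf_le_def)
next
  case False
  let ?u = "lead_index (x + y)"
  have "coeffs (x + y) ?u \<noteq> 0"
    using leading_index_lead_index[OF add_in_hamel_seqs[OF assms] False]
    by (simp add: leading_index_def)
  then have "coeffs x ?u \<noteq> 0 \<or> coeffs y ?u \<noteq> 0"
    using assms by (auto simp: coeffs_add)
  moreover have "hamel_val (x + y) = Some (basis_seq ?u)"
    using False by (simp add: hamel_val_def)
  ultimately show ?thesis
    using hamel_val_le[OF assms(1), of ?u] hamel_val_le[OF assms(2), of ?u] by auto
qed

lemma hamel_val_scale:
  assumes "x \<in> hamel_seqs" "a \<noteq> 0"
  shows "hamel_val (\<lambda>n. a * x n) = hamel_val x"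
proof (cases "x = 0")
  case True
  then show ?thesis
    by (simp add: hamel_val_def zero_fun_def)
next
  case False
  then have "(\<lambda>n. a * x n) \<noteq> 0"
    using assms(2) by (auto simp: fun_eq_iff)
  moreover have "lead_index (\<lambda>n. a * x n) = lead_index x"
    using leading_index_lead_index[OF assms(1) False] assms
    by (intro lead_index_eqI) (simp add: coeffs_scale leading_index_scale)
  ultimately show ?thesis
    using False by (simp add: hamel_val_def)
qed

lemma hamel_val_antimono:
  assumes x: "x \<in> hamel_seqs" and y: "y \<in> hamel_seqs"
    and "lead_less 0 x" "lead_less x y"
  shows "inf_le lex_less (hamel_val y) (hamel_val x)"
proof -
  note order = strict_total_order_basis_lex_less
  have "lead_less 0 y"
    using assms lead_less_trans zero_in_hamel_seqs by blast
  then have "x \<noteq> 0" "y \<noteq> 0"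
    using assms by (auto simp: lead_less_def coeffs_zero not_leading_pos_zero)
  have lx: "leading_index basis_lex_less (coeffs x) (lead_index x)"
    and ly: "leading_index basis_lex_less (coeffs y) (lead_index y)"
    using leading_index_lead_index x y \<open>x \<noteq> 0\<close> \<open>y \<noteq> 0\<close> by blast+
  have "0 < coeffs x (lead_index x)"
    using leading_pos_iff[OF order lx] \<open>lead_less 0 x\<close> by (simp add: lead_less_def)
  moreover have "leading_pos basis_lex_less (coeffs y - coeffs x)"
    using \<open>lead_less x y\<close> lead_less_iff x y by blast
  ultimately have "lead_index y = lead_index x \<or> basis_lex_less (lead_index y) (lead_index x)"
    using leading_index_antimono[OF order lx _ ly] by blast
  with \<open>x \<noteq> 0\<close> \<open>y \<noteq> 0\<close> show ?thesis
    by (auto simp: hamel_val_def inf_le_def basis_lex_less_def)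
qed

lemma hamel_val_basis_seq: "hamel_val (basis_seq s) = Some (basis_seq s)"
proof -
  have "basis_seq s \<noteq> 0"
    using coeffs_basis_seq[of s] coeffs_zero by (metis zero_neq_one zero_fun_def)
  moreover have "lead_index (basis_seq s) = s"
    by (rule lead_index_eqI[OF leading_index_basis_seq])
  ultimately show ?thesis
    by (simp add: hamel_val_def)
qed

lemma hamel_valuation_hamel_val:
  "hamel_valuation (hamel_seqs :: (nat \<Rightarrow> 'a::linordered_field) set) (+) 0 (\<lambda>a x n. a * x n)
     lex_less lead_less hamel_val"
  unfolding hamel_valuation_def
proof (intro conjI ballI allI impI)
  fix x y :: "nat \<Rightarrow> 'a" and a :: 'a
  assume x: "x \<in> hamel_seqs"
  show "hamel_val x = None \<or> (\<exists>g\<in>hamel_seqs. hamel_val x = Some g)"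
    using basis_seq_in_hamel_seqs by (auto simp: hamel_val_def)
  show "hamel_val x = None \<longleftrightarrow> x = 0"
    by (simp add: hamel_val_def)
  show "hamel_val (\<lambda>n. a * x n) = hamel_val x" if "a \<noteq> 0"
    using hamel_val_scale x that by blast
  show "v_ext hamel_val (hamel_val x) = hamel_val x"
    unfolding hamel_val_def[of x] by (simp add: hamel_val_basis_seq)
  show "inf_less lead_less (Some 0) (hamel_val x)"
    by (simp add: hamel_val_def lead_less_zero_basis_seq)
  assume y: "y \<in> hamel_seqs"
  show "inf_le lex_less (hamel_val x) (hamel_val (x + y)) \<or> inf_le lex_less (hamel_val y) (hamel_val (x + y))"
    using hamel_val_ultrametric x y by blast
  show "inf_le lex_less (hamel_val y) (hamel_val x)" if "lead_less 0 x" "lead_less x y"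
    using hamel_val_antimono x y that by blast
qed

lemma dense_hamel_hamel_val: "dense_hamel (hamel_seqs :: (nat \<Rightarrow> 'a::linordered_field) set) lex_less hamel_val"
  unfolding dense_hamel_def
proof (intro ballI impI)
  fix a b :: "nat \<Rightarrow> 'a"
  assume "lex_less a b"
  then obtain p where "lex_less a (basis_seq p)" "lex_less (basis_seq p) b"
    using lex_interval_contains_cylinder basis_seq_prefix by metis
  then show "\<exists>c\<in>hamel_seqs. inf_less lex_less (Some a) (hamel_val c) \<and> inf_less lex_less (hamel_val c) (Some b)"
    by (intro bexI[of _ "basis_seq p"]) (simp_all add: hamel_val_basis_seq basis_seq_in_hamel_seqs)
qed

lemma hamel_seqs_prefix_above:
  fixes \<beta> p :: "'a::linordered_field list"
  assumes "p \<noteq> []"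
  obtains w t where "w \<in> hamel_seqs" "\<forall>k<length p. w k = p ! k"
    and "leading_index basis_lex_less (coeffs w) t" "0 < coeffs w t" "basis_lex_less \<beta> t"
proof -
  \<comment> \<open>Both indices begin above the first entry of the basis vector of \<beta>, hence lie above \<beta>;
    \<mu> corrects the first entry to hd p (T > 0 keeps T + 1 nonzero), and t1 leads with
    coefficient 1.\<close>
  define T where "T = \<bar>basis_seq \<beta> 0\<bar> + 1"
  define t1 where "t1 = T # tl p"
  define t2 where "t2 = (T + 1) # replicate (length p - 1) 0"
  define \<mu> where "\<mu> = (hd p - T) / (T + 1)"
  define w where "w = basis_seq t1 + (\<lambda>n. \<mu> * basis_seq t2 n)"
  have T: "basis_seq \<beta> 0 < T" "0 < T"
    by (auto simp: T_def)
  have lengths: "length t1 = length p" "length t2 = length p"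
    using assms by (simp_all add: t1_def t2_def)
  then have first: "basis_seq t1 0 = T" "basis_seq t2 0 = T + 1"
    using assms by (simp_all add: basis_seq_prefix t1_def t2_def)
  have "basis_lex_less t1 t2" "basis_lex_less \<beta> t1"
    unfolding basis_lex_less_def lex_less_def using first T by (auto intro!: exI[of _ 0])
  then have "t1 \<noteq> t2"
    using lex_less_irrefl unfolding basis_lex_less_def by blast
  have "w \<in> hamel_seqs"
    unfolding w_def by (simp add: add_in_hamel_seqs scale_in_hamel_seqs basis_seq_in_hamel_seqs)
  moreover have "\<forall>k<length p. w k = p ! k"
  proof (intro allI impI)
    fix k
    assume "k < length p"
    show "w k = p ! k"
    proof (cases k)
      case 0
      have "T + \<mu> * (T + 1) = hd p"
        using T by (simp add: \<mu>_def field_simps)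
      with 0 assms show ?thesis
        by (simp add: w_def first hd_conv_nth)
    next
      case (Suc j)
      with \<open>k < length p\<close> lengths show ?thesis
        by (simp add: w_def basis_seq_prefix t1_def t2_def nth_tl)
    qed
  qed
  moreover have coeffs_w: "coeffs w = (\<lambda>s. (if s = t1 then 1 else 0) + \<mu> * (if s = t2 then 1 else 0))"
    unfolding w_def
    by (simp add: coeffs_add coeffs_scale scale_in_hamel_seqs basis_seq_in_hamel_seqs
        coeffs_basis_seq fun_eq_iff)
  then have "leading_index basis_lex_less (coeffs w) t1" "0 < coeffs w t1"
    using \<open>t1 \<noteq> t2\<close> \<open>basis_lex_less t1 t2\<close> by (auto simp: leading_index_def)
  ultimately show ?thesis
    using that \<open>basis_lex_less \<beta> t1\<close> by blast
qed

lemma hamel_seqs_interval_witness: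
  assumes "a0 \<in> hamel_seqs" "b0 \<in> hamel_seqs" "a1 \<in> hamel_seqs" "b1 \<in> hamel_seqs"
    and "lex_less a0 b0" "lead_less a1 b1"
  shows "\<exists>z\<in>hamel_seqs. lex_less a0 z \<and> lex_less z b0 \<and> lead_less a1 z \<and> lead_less z b1"
proof -
  note order = strict_total_order_basis_lex_less
  have "lex_less (a0 - a1) (b0 - a1)"
    using assms(5) by (simp add: lex_less_diff_iff)
  then obtain p where "p \<noteq> []"
    and cylinder: "\<And>w. \<forall>k<length p. w k = p ! k \<Longrightarrow> lex_less (a0 - a1) w \<and> lex_less w (b0 - a1)"
    by (rule lex_interval_contains_cylinder) auto
  define d where "d = b1 - a1"
  have d: "d \<in> hamel_seqs" "leading_pos basis_lex_less (coeffs d)"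
    using assms(3,4,6) by (simp_all add: d_def diff_in_hamel_seqs lead_less_def)
  then have "d \<noteq> 0"
    by (auto simp: coeffs_zero not_leading_pos_zero)
  then have lead_d: "leading_index basis_lex_less (coeffs d) (lead_index d)" "0 < coeffs d (lead_index d)"
    using d leading_index_lead_index leading_pos_iff[OF order] by blast+
  obtain w t where w: "w \<in> hamel_seqs" "\<forall>k<length p. w k = p ! k"
    and lead_w: "leading_index basis_lex_less (coeffs w) t" "0 < coeffs w t"
    and "basis_lex_less (lead_index d) t"
    using hamel_seqs_prefix_above[OF \<open>p \<noteq> []\<close>] by blast
  define z where "z = a1 + w"
  have "z \<in> hamel_seqs"
    using assms(3) w(1) by (simp add: z_def add_in_hamel_seqs)
  moreover have "lex_less a0 z \<and> lex_less z b0"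
    using cylinder[OF w(2)] lex_less_diff_iff[of a0 a1 z] lex_less_diff_iff[of z a1 b0]
    by (simp add: z_def)
  moreover have "lead_less a1 z"
    using lead_w unfolding lead_less_def leading_pos_def z_def by auto
  moreover have "lead_less z b1"
  proof -
    have "leading_pos basis_lex_less (coeffs d - coeffs w)"
      using leading_pos_diff[OF order lead_d lead_w(1)] \<open>basis_lex_less (lead_index d) t\<close> by blast
    moreover have "b1 - z = d - w"
      by (simp add: z_def d_def)
    ultimately show ?thesis
      using d(1) w(1) by (simp add: lead_less_def coeffs_diff)
  qed
  ultimately show ?thesis
    by blast
qed

theorem lemma4p8:
  shows "\<exists>(G :: (nat \<Rightarrow> 'c::linordered_field) set) add zero (scal :: 'c \<Rightarrow> _) lt0 lt1 v.
           independent_dense_hamel_space G add zero scal lt0 lt1 v"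
proof -
  have lex: "ordered_vector_space_on hamel_seqs (+) 0 (\<lambda>a x n. a * x n) lex_less"
    by (rule ordered_vector_space_lex_less[OF vector_space_hamel_seqs])
  have "lex_less 0 (basis_seq [1 :: 'c])"
    unfolding lex_less_def by (intro exI[of _ 0]) (simp add: basis_seq_prefix)
  then have indep: "independent (hamel_seqs :: (nat \<Rightarrow> 'c) set) lex_less lead_less"
    by (rule independentI_finite_intervals[OF lex ordered_vector_space_lead_less
          basis_seq_in_hamel_seqs _ basis_seq_in_hamel_seqs lead_less_zero_basis_seq
          hamel_seqs_interval_witness])
  have "independent_dense_hamel_space (hamel_seqs :: (nat \<Rightarrow> 'c) set) (+) 0 (\<lambda>a x n. a * x n)
      lex_less lead_less hamel_val"
    unfolding independent_dense_hamel_space_def hamel_space_def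
    by (intro conjI lex indep ordered_vector_space_lead_less hamel_valuation_hamel_val
        dense_hamel_hamel_val)
  then show ?thesis
    by blast
qed

end
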